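(* There is an absolute constant $K>0$ such that the following holds. Let $n\ge2$, $V=\{0,1\}^n$, $\mu$ uniform on $V$, $\beta=\log_2(3/2)$, $\varepsilon>0$, and let $(A,B,W)$ be a partition of $V$ with $(1-\varepsilon)/2\le\mu(A)\le(1+\varepsilon)/2$, $\mu(W)\le\varepsilon n^{-\beta}$ and $|\nabla(A,B)|<(1+\varepsilon)2^{n-1}$. Then \[ |\{x\in A: h_{AB}(x)\neq 1\}|\le K\varepsilon |A| . \]
   Context: $V=\{0,1\}^n$ is the vertex set of the Hamming cube $Q_n$. $d_T(x)$ is the number of neighbors of $x$ in $T$. For disjoint $A,B$, $h_{AB}(x)=d_B(x)$ if $x\in A$ and $h_{AB}(x)=0$ otherwise. $\nabla(A,B)$ is the set of adjacent pairs $(x,y)$ with $x\in A$, $y\in B$. *)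

theory Defs
  imports Complex_Main
begin

definition cube :: "nat \<Rightarrow> bool list set" where
  "cube n = {x. length x = n}"

definition cube_adj :: "bool list \<Rightarrow> bool list \<Rightarrow> bool" where
  "cube_adj x y \<longleftrightarrow> length x = length y \<and> card {i. i < length x \<and> x ! i \<noteq> y ! i} = 1"

definition deg_in :: "bool list set \<Rightarrow> bool list \<Rightarrow> nat" where
  "deg_in T x = card {y \<in> T. cube_adj x y}"

definition h_AB :: "bool list set \<Rightarrow> bool list set \<Rightarrow> bool list \<Rightarrow> nat" where
  "h_AB A B x = (if x \<in> A then deg_in B x else 0)"

definition edge_boundary :: "bool list set \<Rightarrow> bool list set \<Rightarrow> (bool list \<times> bool list) set" where
  "edge_boundary A B = {(x, y). x \<in> A \<and> y \<in> B \<and> cube_adj x y}"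

definition mu :: "nat \<Rightarrow> bool list set \<Rightarrow> real" where
  "mu n S = real (card S) / 2 ^ n"

end

theory Submission
  imports Defs
begin

text \<open>
  Put \<open>\<phi>(0) = 0\<close> and \<open>\<phi>(t) = \<surd>(2t - 1)\<close> for \<open>t \<ge> 1\<close>. Every \<open>S \<subseteq> Q\<^sub>n\<close> satisfies the
  isoperimetric inequality \<open>\<Sum>\<^sub>x\<^sub>\<in>\<^sub>S \<phi>(d\<^sub>V\<^sub>-\<^sub>S(x)) \<ge> 2|S|(1 - \<mu>(S))\<close>, proved by induction on \<open>n\<close>
  by splitting \<open>S\<close> along the first coordinate; the induction step only needs
  \<open>\<phi>(t+1)\<^sup>2 = \<phi>(t)\<^sup>2 + 2\<close>. Applied to \<open>S = A \<union> W\<close> it gives \<open>\<Sum>\<^sub>x\<^sub>\<in>\<^sub>A \<phi>(d\<^sub>B(x)) \<ge> (1/2 - O(\<epsilon>))2\<^sup>n\<close>,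
  because \<open>W\<close> is so small that its vertices, whose weights are at most \<open>\<surd>(2n)\<close>, contribute
  only \<open>O(\<epsilon>)2\<^sup>n\<close>. On the other hand \<open>\<Sum>\<^sub>x\<^sub>\<in>\<^sub>A d\<^sub>B(x) = |\<nabla>(A,B)| < (1 + \<epsilon>)2\<^sup>n\<^sup>-\<^sup>1\<close>, and
  \<open>[t \<noteq> 1] \<le> 7t + 1 - 8\<phi>(t)\<close> for all \<open>t\<close>, with equality at \<open>t = 1\<close>; summing over \<open>A\<close> bounds the
  number of vertices with \<open>h\<^sub>A\<^sub>B \<noteq> 1\<close> by \<open>O(\<epsilon>)2\<^sup>n\<close>.
\<close>

section \<open>Combinatorics of the cube\<close>

lemma cube_eq_lists: "cube n = {xs. set xs \<subseteq> (UNIV::bool set) \<and> length xs = n}"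
  by (auto simp: cube_def)

lemma finite_cube: "finite (cube n)"
  unfolding cube_eq_lists by (rule finite_lists_length_eq) simp

lemma card_cube: "card (cube n) = 2 ^ n"
  unfolding cube_eq_lists using card_lists_length_eq[of "UNIV::bool set" n] by simp

lemma card_diff_positions_Cons:
  "card {i. i < length (c # x) \<and> (c # x) ! i \<noteq> (d # y) ! i} =
   (if c = d then 0 else 1) + card {i. i < length x \<and> x ! i \<noteq> y ! i}"
proof -
  have "{i. i < length (c # x) \<and> (c # x) ! i \<noteq> (d # y) ! i} =
        (if c = d then {} else {0}) \<union> Suc ` {i. i < length x \<and> x ! i \<noteq> y ! i}"
    by (rule set_eqI) (auto simp: nth_Cons split: nat.splits)
  moreover have "card (Suc ` {i. i < length x \<and> x ! i \<noteq> y ! i}) =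
                 card {i. i < length x \<and> x ! i \<noteq> y ! i}"
    by (rule card_image) simp
  ultimately show ?thesis
    by (simp add: card_Un_disjoint)
qed

lemma cube_adj_Cons:
  assumes "length x = length y"
  shows "cube_adj (c # x) (d # y) \<longleftrightarrow> (c = d \<and> cube_adj x y) \<or> (c \<noteq> d \<and> x = y)"
proof -
  define k where "k = card {i. i < length x \<and> x ! i \<noteq> y ! i}"
  have "k = 0 \<longleftrightarrow> x = y"
    using assms by (auto simp: k_def intro: nth_equalityI)
  moreover have "cube_adj x y \<longleftrightarrow> k = 1"
    using assms by (simp add: cube_adj_def k_def)
  moreover have "cube_adj (c # x) (d # y) \<longleftrightarrow> (if c = d then 0 else 1) + k = 1"
    using assms card_diff_positions_Cons[of c x d y] by (simp add: cube_adj_def k_def)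
  ultimately show ?thesis
    by auto
qed

lemma cube_adj_imp_flip:
  assumes "cube_adj x y"
  shows "y \<in> (\<lambda>i. x[i := \<not> x ! i]) ` {..<length x}"
proof -
  have len: "length x = length y"
    using assms by (simp add: cube_adj_def)
  have "card {i. i < length x \<and> x ! i \<noteq> y ! i} = 1"
    using assms unfolding cube_adj_def by blast
  then obtain i where i: "{i. i < length x \<and> x ! i \<noteq> y ! i} = {i}"
    by (rule card_1_singletonE)
  then have "i < length x" "x ! i \<noteq> y ! i" "\<And>j. j < length x \<Longrightarrow> j \<noteq> i \<Longrightarrow> x ! j = y ! j"
    by auto
  then have "y = x[i := \<not> x ! i]"
    using len by (intro nth_equalityI) (auto simp: nth_list_update)
  then show ?thesis
    using \<open>i < length x\<close> by auto
qed

lemma deg_in_le: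
  assumes "x \<in> cube n"
  shows "deg_in B x \<le> n"
proof -
  have "{y \<in> B. cube_adj x y} \<subseteq> (\<lambda>i. x[i := \<not> x ! i]) ` {..<length x}"
    using cube_adj_imp_flip by blast
  then have "deg_in B x \<le> card ((\<lambda>i. x[i := \<not> x ! i]) ` {..<length x})"
    unfolding deg_in_def by (rule card_mono[rotated]) simp
  also have "\<dots> \<le> card {..<length x}"
    by (rule card_image_le) simp
  finally show ?thesis
    using assms by (simp add: cube_def)
qed

lemma card_edge_boundary:
  assumes "finite A" "finite B"
  shows "card (edge_boundary A B) = (\<Sum>x\<in>A. deg_in B x)"
proof -
  have "edge_boundary A B = (SIGMA x:A. {y \<in> B. cube_adj x y})"
    unfolding edge_boundary_def by auto
  then show ?thesis
    using assms by (simp add: deg_in_def)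
qed

definition cube_slice :: "bool list set \<Rightarrow> bool \<Rightarrow> bool list set" where
  "cube_slice A c = {x. c # x \<in> A}"

lemma cube_slice_subset: "A \<subseteq> cube (Suc n) \<Longrightarrow> cube_slice A c \<subseteq> cube n"
  by (auto simp: cube_slice_def cube_def)

lemma cube_Suc_split:
  assumes "A \<subseteq> cube (Suc n)"
  shows "A = Cons False ` cube_slice A False \<union> Cons True ` cube_slice A True"
proof (rule set_eqI)
  fix z
  show "z \<in> A \<longleftrightarrow> z \<in> Cons False ` cube_slice A False \<union> Cons True ` cube_slice A True"
  proof (cases z)
    case Nil
    then show ?thesis using assms by (auto simp: cube_def)
  next
    case (Cons d y)
    then show ?thesis by (cases d) (auto simp: cube_slice_def)
  qed
qed

lemma sum_cube_Suc_split:
  assumes "A \<subseteq> cube (Suc n)"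
  shows "(\<Sum>z\<in>A. f z) =
    (\<Sum>x\<in>cube_slice A False. f (False # x)) + (\<Sum>x\<in>cube_slice A True. f (True # x))"
proof -
  have fin: "finite (cube_slice A c)" for c
    using cube_slice_subset[OF assms] finite_cube finite_subset by blast
  have "(\<Sum>z\<in>A. f z) = (\<Sum>z\<in>Cons False ` cube_slice A False. f z) + (\<Sum>z\<in>Cons True ` cube_slice A True. f z)"
    by (subst cube_Suc_split[OF assms], rule sum.union_disjoint) (use fin in auto)
  then show ?thesis
    by (simp add: sum.reindex)
qed

lemma deg_in_complement_Cons:
  assumes "x \<in> cube n"
  shows "deg_in (cube (Suc n) - A) (c # x) =
    deg_in (cube n - cube_slice A c) x + (if x \<in> cube_slice A (\<not> c) then 0 else 1)"
proof -
  have "{y \<in> cube (Suc n) - A. cube_adj (c # x) y} =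
      Cons c ` {y \<in> cube n - cube_slice A c. cube_adj x y} \<union>
      (if x \<in> cube_slice A (\<not> c) then {} else {(\<not> c) # x})"
  proof (rule set_eqI)
    fix z
    show "z \<in> {y \<in> cube (Suc n) - A. cube_adj (c # x) y} \<longleftrightarrow>
      z \<in> Cons c ` {y \<in> cube n - cube_slice A c. cube_adj x y} \<union>
           (if x \<in> cube_slice A (\<not> c) then {} else {(\<not> c) # x})"
    proof (cases z)
      case Nil
      then show ?thesis by (auto simp: cube_def)
    next
      case (Cons d y)
      show ?thesis
      proof (cases "length y = n")
        case True
        then have "length x = length y"
          using assms by (simp add: cube_def)
        then show ?thesis
          using Cons True assms cube_adj_Cons[of x y c d]
          by (cases c; cases d) (auto simp: cube_def cube_slice_def)
      qed (use Cons assms in \<open>auto simp: cube_def\<close>)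
    qed
  qed
  moreover have "card (Cons c ` {y \<in> cube n - cube_slice A c. cube_adj x y} \<union>
      (if x \<in> cube_slice A (\<not> c) then {} else {(\<not> c) # x})) =
      card {y \<in> cube n - cube_slice A c. cube_adj x y} + (if x \<in> cube_slice A (\<not> c) then 0 else 1)"
    using finite_cube[of n] by (subst card_Un_disjoint) (auto simp: card_image)
  ultimately show ?thesis
    unfolding deg_in_def by simp
qed

section \<open>The weight function\<close>

definition phi :: "nat \<Rightarrow> real" where
  "phi t = (if t = 0 then 0 else sqrt (2 * real t - 1))"

lemma phi_nonneg: "0 \<le> phi t"
  by (simp add: phi_def)

lemma phi_mono_Suc: "phi t \<le> phi (Suc t)"
  by (simp add: phi_def)

lemma phi_le_sqrt: "t \<le> n \<Longrightarrow> phi t \<le> sqrt (2 * real n)"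
  by (simp add: phi_def)

lemma phi_Suc: "t \<noteq> 0 \<Longrightarrow> phi (Suc t) = sqrt ((phi t)\<^sup>2 + 2)"
  by (simp add: phi_def)

lemma phi_Suc_ge_half: "phi t / 2 + 1 \<le> phi (Suc t)"
proof (cases "t = 0")
  case False
  define u where "u = phi t"
  have "0 \<le> (u - 2/3)\<^sup>2 * 3 + 4/3"
    by simp
  then have "(u / 2 + 1)\<^sup>2 \<le> u\<^sup>2 + 2"
    by (simp add: power2_eq_square algebra_simps)
  then show ?thesis
    using False by (simp add: u_def phi_Suc real_le_rsqrt)
qed (simp add: phi_def)

lemma phi_Suc_ge_affine:
  assumes "0 \<le> d" "d \<le> 1/2"
  shows "(1 - 2 * d\<^sup>2) * phi t + 2 * d \<le> phi (Suc t)"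
proof (cases "t = 0")
  case True
  then show ?thesis using assms by (simp add: phi_def)
next
  case False
  define u where "u = phi t"
  have u1: "u \<ge> 1"
    using False by (simp add: u_def phi_def)
  then have "1 \<le> 4 * u\<^sup>2"
    using one_le_power[of u 2] by linarith
  then have "1 / (4 * u\<^sup>2) \<le> 1"
    by (simp add: divide_le_eq)
  moreover have "(u + 1 / (2 * u))\<^sup>2 = u\<^sup>2 + 1 + 1 / (4 * u\<^sup>2)"
    using u1 by (simp add: power2_eq_square field_simps)
  ultimately have "u + 1 / (2 * u) \<le> sqrt (u\<^sup>2 + 2)"
    by (intro real_le_rsqrt) simp
  moreover have "u + 1 / (2 * u) - ((1 - 2 * d\<^sup>2) * u + 2 * d) = (1 - 2 * d * u)\<^sup>2 / (2 * u)"
    using u1 by (simp add: power2_eq_square field_simps)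
  moreover have "0 \<le> (1 - 2 * d * u)\<^sup>2 / (2 * u)"
    using u1 by simp
  ultimately show ?thesis
    using False by (simp add: u_def phi_Suc)
qed

lemma indicator_ne_1_le_phi: "(if t \<noteq> 1 then 1 else 0) \<le> 7 * real t + 1 - 8 * phi t"
proof (cases "t \<ge> 2")
  case True
  then have "real t \<ge> 2"
    by simp
  then have "0 \<le> (real t - 2) * (49 * real t - 30) + 4"
    by simp
  then have "2 * real t - 1 \<le> (7 * real t / 8)\<^sup>2"
    by (simp add: power2_eq_square algebra_simps)
  then have "sqrt (2 * real t - 1) \<le> 7 * real t / 8"
    by (intro real_le_lsqrt) auto
  then show ?thesis
    using True by (simp add: phi_def)
next
  case False
  then have "t = 0 \<or> t = 1" by auto
  then show ?thesis by (auto simp: phi_def)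
qed

section \<open>An isoperimetric inequality in the cube\<close>

text \<open>
  In the induction step the two slices have sizes \<open>p \<ge> q\<close> in subcubes of size \<open>M\<close>. The
  vertices of the larger slice whose partner is missing gain one boundary edge, and
  \<open>\<phi>(t+1) \<ge> (1 - \<lambda>)\<phi>(t) + m\<close> lets this gain pay for the loss caused by the imbalance
  \<open>d = (p - q)/M\<close>; the certificate is \<open>(\<lambda>, m) = (2d\<^sup>2, 2d)\<close> for \<open>d \<le> 1/2\<close> and
  \<open>(1/2, 1)\<close> otherwise.
\<close>

lemma merge_ineq_balanced:
  fixes p q M d :: real
  assumes "0 \<le> q" "q \<le> p" "p \<le> M" "0 < M" "d = (p - q) / M"
  shows "(p + q) * (2 * M - (p + q)) / M \<le>
    (1 - 2 * d\<^sup>2) * (2 * p * (M - p) / M) + 2 * d * (p - q) + 2 * q * (M - q) / M"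
proof -
  have pq: "p - q = d * M"
    using assms by simp
  have "4 * p * (M - p) \<le> M\<^sup>2"
    using sum_squares_ge_zero[of "M - 2 * p" 0] by (simp add: power2_eq_square algebra_simps)
  then have "d\<^sup>2 * (4 * p * (M - p)) \<le> d\<^sup>2 * M\<^sup>2"
    by (rule mult_left_mono) simp
  moreover have "(p - q)\<^sup>2 = d\<^sup>2 * M\<^sup>2" "2 * d * (p - q) * M = 2 * d\<^sup>2 * M\<^sup>2"
    using pq by (simp_all add: power2_eq_square)
  moreover have "(p + q) * (2 * M - (p + q)) = 2 * p * (M - p) + 2 * q * (M - q) + (p - q)\<^sup>2"
    by (simp add: power2_eq_square algebra_simps)
  ultimately have "(p + q) * (2 * M - (p + q)) \<le>
      (1 - 2 * d\<^sup>2) * (2 * p * (M - p)) + 2 * d * (p - q) * M + 2 * q * (M - q)"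
    by (simp add: algebra_simps)
  then have "(p + q) * (2 * M - (p + q)) / M \<le>
      ((1 - 2 * d\<^sup>2) * (2 * p * (M - p)) + 2 * d * (p - q) * M + 2 * q * (M - q)) / M"
    using assms(4) by (intro divide_right_mono) auto
  then show ?thesis
    using assms(4) by (simp add: add_divide_distrib)
qed

lemma merge_ineq_unbalanced:
  fixes p q M :: real
  assumes "0 \<le> q" "q \<le> p" "p \<le> M" "0 < M" "M \<le> 2 * (p - q)"
  shows "(p + q) * (2 * M - (p + q)) / M \<le>
    (1 - 1/2) * (2 * p * (M - p) / M) + 1 * (p - q) + 2 * q * (M - q) / M"
proof -
  have "q * (M - 2 * p + q) \<le> 0"
    using assms by (intro mult_nonneg_nonpos) auto
  then have "(p + q) * (2 * M - (p + q)) \<le>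
      (1 - 1/2) * (2 * p * (M - p)) + 1 * (p - q) * M + 2 * q * (M - q)"
    by (simp add: algebra_simps)
  then have "(p + q) * (2 * M - (p + q)) / M \<le>
      ((1 - 1/2) * (2 * p * (M - p)) + 1 * (p - q) * M + 2 * q * (M - q)) / M"
    using assms(4) by (intro divide_right_mono) auto
  then show ?thesis
    using assms(4) by (simp add: add_divide_distrib)
qed

lemma merge_weight_certificate:
  fixes p q M :: real
  assumes "0 \<le> q" "q \<le> p" "p \<le> M" "0 < M"
  obtains lam m where "0 \<le> lam" "lam \<le> 1" "0 \<le> m" "\<And>t. (1 - lam) * phi t + m \<le> phi (Suc t)"
    and "(p + q) * (2 * M - (p + q)) / M \<le>
      (1 - lam) * (2 * p * (M - p) / M) + m * (p - q) + 2 * q * (M - q) / M"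
proof (cases "(p - q) / M \<le> 1/2")
  case True
  define d where "d = (p - q) / M"
  have d: "0 \<le> d" "d \<le> 1/2"
    using assms True by (simp_all add: d_def)
  then have "2 * d\<^sup>2 \<le> 1"
    using power_mono[OF d(2) d(1), of 2] by (simp add: power2_eq_square)
  then show ?thesis
    using that[of "2 * d\<^sup>2" "2 * d"] d phi_Suc_ge_affine[OF d] merge_ineq_balanced[OF assms d_def]
    by simp
next
  case False
  then have "M \<le> 2 * (p - q)"
    using assms(4) by (simp add: field_simps)
  then show ?thesis
    using that[of "1/2" 1] phi_Suc_ge_half merge_ineq_unbalanced[OF assms]
    by (simp add: field_simps)
qed

lemma sum_phi_Suc_outside_ge:
  assumes "finite P" "0 \<le> lam" "\<And>t. (1 - lam) * phi t + m \<le> phi (Suc t)"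
  shows "(1 - lam) * (\<Sum>x\<in>P. phi (f x)) + m * real (card (P - Q)) \<le>
    (\<Sum>x\<in>P. phi (f x + (if x \<in> Q then 0 else 1)))"
proof -
  have "(1 - lam) * (\<Sum>x\<in>P. phi (f x)) + m * real (card (P - Q)) =
      (\<Sum>x\<in>P. (1 - lam) * phi (f x) + (if x \<in> Q then 0 else m))"
    using assms(1) by (simp add: sum.distrib sum_distrib_left sum.If_cases Diff_eq)
  also have "\<dots> \<le> (\<Sum>x\<in>P. phi (f x + (if x \<in> Q then 0 else 1)))"
  proof (rule sum_mono)
    fix x
    have "0 \<le> lam * phi (f x)"
      using assms(2) phi_nonneg[of "f x"] by simp
    then have "(1 - lam) * phi (f x) \<le> phi (f x)"
      by (simp add: algebra_simps)
    then show "(1 - lam) * phi (f x) + (if x \<in> Q then 0 else m) \<le>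
        phi (f x + (if x \<in> Q then 0 else 1))"
      using assms(3)[of "f x"] by simp
  qed
  finally show ?thesis .
qed

lemma isoperimetric_merge_step:
  fixes P Q :: "'a set" and f g :: "'a \<Rightarrow> nat" and M :: real
  assumes fin: "finite P" "finite Q" and le: "card Q \<le> card P"
    and "real (card P) \<le> M" "0 < M"
    and IHP: "2 * real (card P) * (M - real (card P)) / M \<le> (\<Sum>x\<in>P. phi (f x))"
    and IHQ: "2 * real (card Q) * (M - real (card Q)) / M \<le> (\<Sum>x\<in>Q. phi (g x))"
  shows "(real (card P) + real (card Q)) * (2 * M - (real (card P) + real (card Q))) / M \<le>
    (\<Sum>x\<in>P. phi (f x + (if x \<in> Q then 0 else 1))) + (\<Sum>x\<in>Q. phi (g x + (if x \<in> P then 0 else 1)))"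
proof -
  obtain lam m where lam: "0 \<le> lam" "lam \<le> 1" and "0 \<le> m"
    and phi_step: "\<And>t. (1 - lam) * phi t + m \<le> phi (Suc t)"
    and merge: "(real (card P) + real (card Q)) * (2 * M - (real (card P) + real (card Q))) / M \<le>
      (1 - lam) * (2 * real (card P) * (M - real (card P)) / M)
      + m * (real (card P) - real (card Q)) + 2 * real (card Q) * (M - real (card Q)) / M"
    using merge_weight_certificate[of "real (card Q)" "real (card P)" M] le assms(4,5) by auto
  have "real (card P) - real (card Q) \<le> real (card (P - Q))"
    using diff_card_le_card_Diff[OF fin(2), of P] le by linarith
  then have "m * (real (card P) - real (card Q)) \<le> m * real (card (P - Q))"
    using \<open>0 \<le> m\<close> by (rule mult_left_mono)
  moreover have "(1 - lam) * (2 * real (card P) * (M - real (card P)) / M) \<le> (1 - lam) * (\<Sum>x\<in>P. phi (f x))"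
    using IHP lam by (intro mult_left_mono) auto
  moreover have "(\<Sum>x\<in>Q. phi (g x)) \<le> (\<Sum>x\<in>Q. phi (g x + (if x \<in> P then 0 else 1)))"
    by (intro sum_mono) (simp add: phi_mono_Suc)
  ultimately show ?thesis
    using merge IHQ sum_phi_Suc_outside_ge[OF fin(1) lam(1) phi_step, of f Q] by linarith
qed

theorem phi_isoperimetric:
  "A \<subseteq> cube n \<Longrightarrow>
    2 * real (card A) * (2 ^ n - real (card A)) / 2 ^ n \<le> (\<Sum>x\<in>A. phi (deg_in (cube n - A) x))"
proof (induction n arbitrary: A)
  case 0
  then have "A = {} \<or> A = {[]}"
    by (auto simp: cube_def)
  then show ?case
    by (auto simp: phi_nonneg)
next
  case (Suc n)
  define A0 A1 where "A0 = cube_slice A False" and "A1 = cube_slice A True"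
  have sub: "A0 \<subseteq> cube n" "A1 \<subseteq> cube n"
    using cube_slice_subset[OF Suc.prems] by (auto simp: A0_def A1_def)
  then have fin: "finite A0" "finite A1"
    using finite_cube finite_subset by blast+
  have card_le: "real (card A0) \<le> 2 ^ n" "real (card A1) \<le> 2 ^ n"
    using card_mono[OF finite_cube sub(1)] card_mono[OF finite_cube sub(2)]
    by (simp_all add: card_cube flip: of_nat_le_iff)
  have "(\<Sum>x\<in>A. phi (deg_in (cube (Suc n) - A) x)) =
      (\<Sum>x\<in>A0. phi (deg_in (cube n - A0) x + (if x \<in> A1 then 0 else 1))) +
      (\<Sum>x\<in>A1. phi (deg_in (cube n - A1) x + (if x \<in> A0 then 0 else 1)))"
    unfolding sum_cube_Suc_split[OF Suc.prems] A0_def A1_def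
    using sub by (intro arg_cong2[where f = "(+)"] sum.cong)
      (auto simp: deg_in_complement_Cons A0_def A1_def)
  moreover have "card A = card A0 + card A1"
    using sum_cube_Suc_split[OF Suc.prems, of "\<lambda>_. 1::nat"] by (simp add: A0_def A1_def)
  moreover have "(real (card A0) + real (card A1)) * (2 * 2 ^ n - (real (card A0) + real (card A1))) / 2 ^ n \<le>
      (\<Sum>x\<in>A0. phi (deg_in (cube n - A0) x + (if x \<in> A1 then 0 else 1))) +
      (\<Sum>x\<in>A1. phi (deg_in (cube n - A1) x + (if x \<in> A0 then 0 else 1)))"
  proof (cases "card A1 \<le> card A0")
    case True
    show ?thesis
      using isoperimetric_merge_step[OF fin True card_le(1) _ Suc.IH[OF sub(1)] Suc.IH[OF sub(2)]]
      by simp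
  next
    case False
    then show ?thesis
      using isoperimetric_merge_step[OF fin(2,1) _ card_le(2) _ Suc.IH[OF sub(2)] Suc.IH[OF sub(1)]]
      by (simp add: add.commute)
  qed
  ultimately show ?case
    by (simp add: field_simps)
qed

section \<open>Vertices of \<open>A\<close> with \<open>h\<^sub>A\<^sub>B \<noteq> 1\<close>\<close>

lemma card_h_AB_ne_1_le:
  assumes "finite A" "finite B"
  shows "real (card {x \<in> A. h_AB A B x \<noteq> 1}) \<le>
    7 * real (card (edge_boundary A B)) + real (card A) - 8 * (\<Sum>x\<in>A. phi (deg_in B x))"
proof -
  have "{x \<in> A. h_AB A B x \<noteq> 1} = {x \<in> A. deg_in B x \<noteq> 1}"
    by (auto simp: h_AB_def)
  then have "real (card {x \<in> A. h_AB A B x \<noteq> 1}) = (\<Sum>x\<in>A. if deg_in B x \<noteq> 1 then 1 else 0)"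
    using assms by (simp add: sum.If_cases Int_def)
  also have "\<dots> \<le> (\<Sum>x\<in>A. 7 * real (deg_in B x) + 1 - 8 * phi (deg_in B x))"
    by (intro sum_mono indicator_ne_1_le_phi)
  also have "\<dots> = 7 * real (card (edge_boundary A B)) + real (card A) - 8 * (\<Sum>x\<in>A. phi (deg_in B x))"
    using assms by (simp add: card_edge_boundary sum.distrib sum_subtractf sum_distrib_left)
  finally show ?thesis .
qed

lemma product_lower_bound:
  fixes N s \<epsilon> :: real
  assumes "0 < N" "\<epsilon> \<le> 1/3" "(1 - \<epsilon>) * N / 2 \<le> s" "s \<le> (1 + 3 * \<epsilon>) * N / 2"
  shows "(1 - 4 * \<epsilon>) * N / 2 \<le> 2 * s * (N - s) / N"
proof -
  have "0 \<le> (1 - \<epsilon>) * N / 2" "0 \<le> (1 - 3 * \<epsilon>) * N / 2"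
    using assms(1,2) by simp_all
  moreover have "(1 - 3 * \<epsilon>) * N / 2 \<le> N - s"
    using assms(4) by (simp add: field_simps)
  ultimately have "(1 - \<epsilon>) * N / 2 * ((1 - 3 * \<epsilon>) * N / 2) \<le> s * (N - s)"
    using assms(3) by (intro mult_mono) auto
  then have "2 * ((1 - \<epsilon>) * N / 2 * ((1 - 3 * \<epsilon>) * N / 2)) / N \<le> 2 * (s * (N - s)) / N"
    using assms(1) by (intro divide_right_mono mult_left_mono) auto
  moreover have "2 * ((1 - \<epsilon>) * N / 2 * ((1 - 3 * \<epsilon>) * N / 2)) / N = (1 - \<epsilon>) * (1 - 3 * \<epsilon>) * N / 2"
    using assms(1) by (simp add: field_simps)
  moreover have "(1 - 4 * \<epsilon>) * N / 2 \<le> (1 - \<epsilon>) * (1 - 3 * \<epsilon>) * N / 2"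
    using assms(1) by (simp add: field_simps)
  ultimately have "(1 - 4 * \<epsilon>) * N / 2 \<le> 2 * (s * (N - s)) / N"
    by linarith
  then show ?thesis
    by (simp only: mult.assoc)
qed

lemma sum_phi_deg_in_ge:
  fixes \<epsilon> :: real and n :: nat
  defines "N \<equiv> (2::real) ^ n"
  assumes part: "A \<union> B \<union> W = cube n" "A \<inter> B = {}" "A \<inter> W = {}" "B \<inter> W = {}"
    and \<epsilon>: "\<epsilon> \<le> 1/3"
    and A: "(1 - \<epsilon>) * N / 2 \<le> card A" "card A \<le> (1 + \<epsilon>) * N / 2"
    and W: "card W \<le> \<epsilon> * N" "card W * sqrt (2 * real n) \<le> 2 * \<epsilon> * N"
  shows "N / 2 - 4 * (\<epsilon> * N) \<le> (\<Sum>x\<in>A. phi (deg_in B x))"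
proof -
  have fin: "finite A" "finite W"
    using finite_cube[of n] unfolding part(1)[symmetric] by simp_all
  have N: "0 < N"
    by (simp add: N_def)
  have card_AW: "real (card (A \<union> W)) = card A + card W"
    using fin part(3) by (simp add: card_Un_disjoint)
  have "cube n - (A \<union> W) = B"
    using part by auto
  then have "2 * real (card (A \<union> W)) * (N - real (card (A \<union> W))) / N \<le>
      (\<Sum>x\<in>A \<union> W. phi (deg_in B x))"
    using phi_isoperimetric[of "A \<union> W" n] part(1) by (auto simp: N_def)
  moreover have "(1 - 4 * \<epsilon>) * N / 2 \<le> 2 * real (card (A \<union> W)) * (N - real (card (A \<union> W))) / N"
  proof (rule product_lower_bound[OF N \<epsilon>])
    show "(1 - \<epsilon>) * N / 2 \<le> real (card (A \<union> W))"
      using A(1) card_AW by simp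
    show "real (card (A \<union> W)) \<le> (1 + 3 * \<epsilon>) * N / 2"
      using A(2) W(1) card_AW by (simp add: field_simps)
  qed
  moreover have "(\<Sum>x\<in>A \<union> W. phi (deg_in B x)) = (\<Sum>x\<in>A. phi (deg_in B x)) + (\<Sum>x\<in>W. phi (deg_in B x))"
    using fin part(3) by (simp add: sum.union_disjoint)
  moreover have "(\<Sum>x\<in>W. phi (deg_in B x)) \<le> (\<Sum>x\<in>W. sqrt (2 * real n))"
    using part(1) by (intro sum_mono phi_le_sqrt deg_in_le) auto
  ultimately have "(1 - 4 * \<epsilon>) * N / 2 - 2 * \<epsilon> * N \<le> (\<Sum>x\<in>A. phi (deg_in B x))"
    using W(2) by simp
  moreover have "(1 - 4 * \<epsilon>) * N / 2 = N / 2 - 2 * (\<epsilon> * N)"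
    by (simp add: field_simps)
  ultimately show ?thesis
    by linarith
qed

lemma card_h_AB_ne_1_bound:
  fixes \<epsilon> :: real and n :: nat
  defines "N \<equiv> (2::real) ^ n"
  assumes part: "A \<union> B \<union> W = cube n" "A \<inter> B = {}" "A \<inter> W = {}" "B \<inter> W = {}"
    and \<epsilon>: "0 < \<epsilon>" "\<epsilon> \<le> 1/3"
    and A: "(1 - \<epsilon>) * N / 2 \<le> card A" "card A \<le> (1 + \<epsilon>) * N / 2"
    and W: "card W \<le> \<epsilon> * N" "card W * sqrt (2 * real n) \<le> 2 * \<epsilon> * N"
    and edges: "card (edge_boundary A B) < (1 + \<epsilon>) * N / 2"
  shows "card {x \<in> A. h_AB A B x \<noteq> 1} \<le> 108 * \<epsilon> * card A"
proof -
  have "finite A" "finite B"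
    using finite_cube[of n] unfolding part(1)[symmetric] by simp_all
  moreover have "(1 + \<epsilon>) * N / 2 = N / 2 + \<epsilon> * N / 2"
    by (simp add: field_simps)
  ultimately have "card {x \<in> A. h_AB A B x \<noteq> 1} \<le> 36 * (\<epsilon> * N)"
    using card_h_AB_ne_1_le[of A B] sum_phi_deg_in_ge[OF part \<epsilon>(2) A[unfolded N_def] W[unfolded N_def]] A(2) edges
    unfolding N_def by linarith
  also have "\<dots> \<le> 36 * (\<epsilon> * (3 * card A))"
  proof -
    have "\<epsilon> * N \<le> 1/3 * N"
      using \<epsilon>(2) by (intro mult_right_mono) (auto simp: N_def)
    moreover have "N / 2 - \<epsilon> * N / 2 \<le> card A"
      using A(1) by (simp add: left_diff_distrib diff_divide_distrib)
    ultimately have "N \<le> 3 * card A"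
      by linarith
    then show ?thesis
      using \<epsilon>(1) by simp
  qed
  finally show ?thesis
    by simp
qed

lemma powr_minus_log2_three_halves_le:
  assumes "n \<ge> 1"
  shows "real n powr (- log 2 (3/2)) * sqrt (2 * real n) \<le> 2"
    and "real n powr (- log 2 (3/2)) \<le> 1"
proof -
  have "(2::real) powr (1/2) = sqrt 2"
    by (simp add: powr_half_sqrt)
  also have "\<dots> \<le> sqrt ((3/2)\<^sup>2)"
    by (rule real_sqrt_le_mono) (simp add: power2_eq_square)
  finally have "(2::real) powr (1/2) \<le> 3/2"
    by simp
  then have "1/2 \<le> log 2 (3/2::real)"
    by (subst le_log_iff) auto
  then have le_inv_sqrt: "real n powr (- log 2 (3/2)) \<le> inverse (sqrt (real n))"
    using assms powr_mono[of "- log 2 (3/2)" "-(1/2)" "real n"]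
    by (simp add: powr_minus powr_half_sqrt)
  have "real n powr (- log 2 (3/2)) * sqrt (2 * real n) \<le> inverse (sqrt (real n)) * sqrt (2 * real n)"
    using le_inv_sqrt by (intro mult_right_mono) auto
  also have "\<dots> = sqrt 2"
    using assms by (simp add: real_sqrt_mult field_simps)
  also have "\<dots> \<le> 2"
    using real_sqrt_le_mono[of 2 4] by (simp add: real_sqrt_eq_iff)
  finally show "real n powr (- log 2 (3/2)) * sqrt (2 * real n) \<le> 2" .
  have "inverse (sqrt (real n)) \<le> 1"
    using assms by (simp add: inverse_le_1_iff)
  then show "real n powr (- log 2 (3/2)) \<le> 1"
    using le_inv_sqrt by simp
qed

lemma card_bounds_of_mu_le_powr:
  fixes \<epsilon> :: real
  assumes "n \<ge> 1" "0 \<le> \<epsilon>" "mu n W \<le> \<epsilon> * real n powr (- log 2 (3/2))"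
  shows "card W \<le> \<epsilon> * 2 ^ n" "card W * sqrt (2 * real n) \<le> 2 * \<epsilon> * 2 ^ n"
proof -
  define \<beta> where "\<beta> = real n powr (- log 2 (3/2))"
  have \<beta>: "\<beta> * sqrt (2 * real n) \<le> 2" "\<beta> \<le> 1"
    using powr_minus_log2_three_halves_le[OF assms(1)] by (simp_all add: \<beta>_def)
  have W: "card W \<le> (\<epsilon> * 2 ^ n) * \<beta>"
    using assms(3) by (simp add: mu_def \<beta>_def field_simps)
  also have "\<dots> \<le> \<epsilon> * 2 ^ n"
    using \<beta>(2) assms(2) by (simp add: mult_left_le)
  finally show "card W \<le> \<epsilon> * 2 ^ n" .
  have "card W * sqrt (2 * real n) \<le> \<epsilon> * 2 ^ n * \<beta> * sqrt (2 * real n)"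
    using W by (intro mult_right_mono) auto
  also have "\<dots> = (\<epsilon> * 2 ^ n) * (\<beta> * sqrt (2 * real n))"
    by (simp only: mult.assoc)
  also have "\<dots> \<le> (\<epsilon> * 2 ^ n) * 2"
    using \<beta>(1) assms(2) by (intro mult_left_mono) auto
  finally show "card W * sqrt (2 * real n) \<le> 2 * \<epsilon> * 2 ^ n"
    by simp
qed

theorem proposition3p3:
  "\<exists>K::real. K > 0 \<and>
     (\<forall>(n::nat) (\<epsilon>::real) A B W.
        n \<ge> 2 \<longrightarrow> \<epsilon> > 0 \<longrightarrow>
        A \<union> B \<union> W = cube n \<longrightarrow> A \<inter> B = {} \<longrightarrow> A \<inter> W = {} \<longrightarrow> B \<inter> W = {} \<longrightarrow>
        (1 - \<epsilon>) / 2 \<le> mu n A \<longrightarrow> mu n A \<le> (1 + \<epsilon>) / 2 \<longrightarrow>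
        mu n W \<le> \<epsilon> * real n powr (- log 2 (3 / 2)) \<longrightarrow>
        real (card (edge_boundary A B)) < (1 + \<epsilon>) * 2 ^ (n - 1) \<longrightarrow>
        real (card {x \<in> A. h_AB A B x \<noteq> 1}) \<le> K * \<epsilon> * real (card A))"
proof (rule exI[of _ 108], intro conjI allI impI)
  fix n :: nat and \<epsilon> :: real and A B W
  assume n: "n \<ge> 2" and \<epsilon>: "\<epsilon> > 0" and part: "A \<union> B \<union> W = cube n"
    "A \<inter> B = {}" "A \<inter> W = {}" "B \<inter> W = {}"
    and A: "(1 - \<epsilon>) / 2 \<le> mu n A" "mu n A \<le> (1 + \<epsilon>) / 2"
    and W: "mu n W \<le> \<epsilon> * real n powr (- log 2 (3 / 2))"
    and edges: "real (card (edge_boundary A B)) < (1 + \<epsilon>) * 2 ^ (n - 1)"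
  show "real (card {x \<in> A. h_AB A B x \<noteq> 1}) \<le> 108 * \<epsilon> * real (card A)"
  proof (cases "\<epsilon> \<le> 1/3")
    case True
    have "(1 - \<epsilon>) * 2 ^ n / 2 \<le> card A" "card A \<le> (1 + \<epsilon>) * 2 ^ n / 2"
      using A by (simp_all add: mu_def field_simps)
    moreover have "card (edge_boundary A B) < (1 + \<epsilon>) * 2 ^ n / 2"
      using edges n by (simp add: power_diff)
    ultimately show ?thesis
      using card_h_AB_ne_1_bound[OF part \<epsilon> True] card_bounds_of_mu_le_powr[of n \<epsilon> W] n \<epsilon> W
      by simp
  next
    case False
    have "card {x \<in> A. h_AB A B x \<noteq> 1} \<le> card A"
      using finite_cube[of n] unfolding part(1)[symmetric] by (intro card_mono) auto
    then show ?thesis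
      using False mult_right_mono[of 1 "108 * \<epsilon>" "real (card A)"] by simp
  qed
qed simp

end
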